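(* Let $m\ge2$ be an integer with $m\not\equiv2\pmod4$ and let $p,q$ be positive integers. If $\zeta_m^p,\zeta_m^{-p},\zeta_m^q,\zeta_m^{-q}$ are $\mathbb{Q}$-linearly independent, then for every choice of signs, $\Delta=\frac{\pm\zeta_m^p\pm\zeta_m^{-p}\pm\zeta_m^q\pm\zeta_m^{-q}}{2}$ is not an algebraic integer, where $\zeta_m=e^{\frac{2\pi}{m}i}$. *)

theory Defs
  imports Complex_Main "HOL-Computational_Algebra.Polynomial"
begin

definition rat_lin_indep4 :: "complex \<Rightarrow> complex \<Rightarrow> complex \<Rightarrow> complex \<Rightarrow> bool" where
  "rat_lin_indep4 a b c d \<longleftrightarrow>
     (\<forall>q1 q2 q3 q4 :: rat.
        of_rat q1 * a + of_rat q2 * b + of_rat q3 * c + of_rat q4 * d = 0 \<longrightarrow>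
        q1 = 0 \<and> q2 = 0 \<and> q3 = 0 \<and> q4 = 0)"

definition zeta :: "nat \<Rightarrow> complex" where
  "zeta m = cis (2 * pi / real m)"

end

theory Submission
  imports Defs "Jordan_Normal_Form.Char_Poly"
begin

(* With x = zeta^p, y = zeta^q put w1 = -y/x and w2 = -xy. Up to the unit y and an integral
   correction coming from the signs, Delta is (1 - w1)(1 - w2)/2, and linear independence makes
   w1, w2 roots of unity other than 1 and -1 that are not both square roots of -1.
   For such a root of unity w, (1 - w)^M divides 2^e n among the algebraic integers with n odd
   and 2e <= M, where 2e = M forces w^2 = -1: if the order of w has an odd part n > 1, then
   1 - w divides n; if w has order 2^(k+1) with k >= 1, then (1 - w)^(2^k) divides 2.
   Raising (1 - w1)(1 - w2)/2 to the power M1 M2 therefore makes a positive power of 2 divide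
   an odd integer, which is absurd. *)

section \<open>Algebraic integers form a ring\<close>

definition int_span :: "'a :: comm_ring_1 set \<Rightarrow> 'a set" where
  "int_span V = range (\<lambda>c. \<Sum>v\<in>V. of_int (c v) * v)"

lemma int_span_iff: "a \<in> int_span V \<longleftrightarrow> (\<exists>c. a = (\<Sum>v\<in>V. of_int (c v) * v))"
  unfolding int_span_def by auto

lemma int_spanI: "a = (\<Sum>v\<in>V. of_int (c v) * v) \<Longrightarrow> a \<in> int_span V"
  unfolding int_span_def by auto

lemma int_span_0: "0 \<in> int_span V"
  unfolding int_span_iff by (intro exI[of _ "\<lambda>_. 0"]) simp

lemma int_span_add:
  assumes "a \<in> int_span V" "b \<in> int_span V"
  shows "a + b \<in> int_span V"
proof -
  from assms obtain c d where "a = (\<Sum>v\<in>V. of_int (c v) * v)" "b = (\<Sum>v\<in>V. of_int (d v) * v)"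
    unfolding int_span_iff by blast
  then have "a + b = (\<Sum>v\<in>V. of_int (c v + d v) * v)"
    by (simp add: sum.distrib distrib_right)
  then show ?thesis
    by (rule int_spanI)
qed

lemma int_span_of_int_mult:
  assumes "a \<in> int_span V"
  shows "of_int k * a \<in> int_span V"
proof -
  from assms obtain c where "a = (\<Sum>v\<in>V. of_int (c v) * v)"
    unfolding int_span_iff by blast
  then have "of_int k * a = (\<Sum>v\<in>V. of_int (k * c v) * v)"
    by (simp add: sum_distrib_left mult.assoc)
  then show ?thesis
    by (rule int_spanI)
qed

lemma int_span_sum: "(\<And>i. i \<in> I \<Longrightarrow> f i \<in> int_span V) \<Longrightarrow> (\<Sum>i\<in>I. f i) \<in> int_span V"
  by (induction I rule: infinite_finite_induct) (auto intro: int_span_0 int_span_add)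

lemma int_span_superset:
  assumes "finite V" "v \<in> V"
  shows "v \<in> int_span V"
proof -
  have "(\<Sum>u\<in>V. of_int (if u = v then 1 else 0) * u) = (\<Sum>u\<in>V. if u = v then u else 0)"
    by (rule sum.cong) auto
  also have "\<dots> = v"
    using assms by simp
  finally show ?thesis
    by (rule int_spanI[OF sym])
qed

lemma int_span_mult_stable:
  assumes "finite V" "\<And>v. v \<in> V \<Longrightarrow> x * v \<in> int_span V" "a \<in> int_span V"
  shows "x * a \<in> int_span V"
proof -
  from assms(3) obtain c where "a = (\<Sum>v\<in>V. of_int (c v) * v)"
    unfolding int_span_iff by blast
  then have "x * a = (\<Sum>v\<in>V. of_int (c v) * (x * v))"
    by (simp add: sum_distrib_left ac_simps)
  also have "\<dots> \<in> int_span V"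
    by (intro int_span_sum int_span_of_int_mult assms(2))
  finally show ?thesis .
qed

lemma int_span_mult:
  assumes "finite V" "finite U" "a \<in> int_span V" "b \<in> int_span U"
  shows "a * b \<in> int_span {v * u |v u. v \<in> V \<and> u \<in> U}"
proof -
  let ?W = "{v * u |v u. v \<in> V \<and> u \<in> U}"
  have "finite ?W"
    using assms(1,2) by (simp add: finite_image_set2)
  from assms(3,4) obtain c d where "a = (\<Sum>v\<in>V. of_int (c v) * v)" "b = (\<Sum>u\<in>U. of_int (d u) * u)"
    unfolding int_span_iff by blast
  then have "a * b = (\<Sum>v\<in>V. \<Sum>u\<in>U. of_int (c v * d u) * (v * u))"
    by (simp add: sum_product ac_simps)
  also have "\<dots> \<in> int_span ?W"
    using \<open>finite ?W\<close> by (blast intro: int_span_sum int_span_of_int_mult int_span_superset)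
  finally show ?thesis .
qed

lemma algebraic_int_eigenvalue_of_int_mat:
  fixes x :: "'a :: field_char_0"
  assumes "A \<in> carrier_mat n n" "eigenvalue (map_mat of_int A) x"
  shows "algebraic_int x"
proof -
  have "poly (map_poly of_int (char_poly A)) x = 0"
    using assms by (simp add: eigenvalue_root_char_poly of_int_hom.char_poly_hom)
  moreover have "lead_coeff (char_poly A) = 1"
    using degree_monic_char_poly[OF assms(1)] by simp
  ultimately show ?thesis
    unfolding algebraic_int_altdef_ipoly by blast
qed

lemma algebraic_int_if_int_span_stable:
  fixes x :: "'a :: field_char_0"
  assumes "finite V" "v\<^sub>0 \<in> V" "v\<^sub>0 \<noteq> 0" and stable: "\<And>v. v \<in> V \<Longrightarrow> x * v \<in> int_span V"
  shows "algebraic_int x"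
proof -
  obtain vs where vs: "distinct vs" "set vs = V"
    using finite_distinct_list[OF assms(1)] by blast
  define n where "n = length vs"
  have "\<forall>v\<in>V. \<exists>c. x * v = (\<Sum>u\<in>V. of_int (c u) * u)"
    using stable unfolding int_span_iff by blast
  then obtain C where C: "\<And>v. v \<in> V \<Longrightarrow> x * v = (\<Sum>u\<in>V. of_int (C v u) * u)"
    by metis
  define A :: "int mat" where "A = mat n n (\<lambda>(i, j). C (vs ! i) (vs ! j))"
  define v where "v = vec n (\<lambda>i. vs ! i)"
  have A: "A \<in> carrier_mat n n"
    unfolding A_def by simp
  have bij: "bij_betw (\<lambda>i. vs ! i) {..<n} V"
    using bij_betw_nth[OF vs(1)] vs(2) n_def by (simp add: atLeast0LessThan)
  have "map_mat of_int A *\<^sub>v v = x \<cdot>\<^sub>v v"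
  proof (rule eq_vecI)
    fix i assume "i < dim_vec (x \<cdot>\<^sub>v v)"
    then have i: "i < n"
      by (simp add: v_def)
    have "(map_mat of_int A *\<^sub>v v) $ i = (\<Sum>j<n. of_int (C (vs ! i) (vs ! j)) * vs ! j)"
      using i by (simp add: A_def v_def mult_mat_vec_def scalar_prod_def atLeast0LessThan)
    also have "\<dots> = (\<Sum>u\<in>V. of_int (C (vs ! i) u) * u)"
      by (rule sum.reindex_bij_betw[OF bij])
    also have "\<dots> = x * vs ! i"
      using C[of "vs ! i"] i vs n_def by auto
    finally show "(map_mat of_int A *\<^sub>v v) $ i = (x \<cdot>\<^sub>v v) $ i"
      using i by (simp add: v_def)
  qed (simp add: v_def A_def)
  moreover have "v \<noteq> 0\<^sub>v n"
  proof
    assume "v = 0\<^sub>v n"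
    obtain i where "i < n" "vs ! i = v\<^sub>0"
      using assms(2) vs n_def by (metis in_set_conv_nth)
    with \<open>v = 0\<^sub>v n\<close> assms(3) show False
      unfolding v_def by (metis index_vec index_zero_vec(1))
  qed
  ultimately have "eigenvalue (map_mat of_int A) x"
    unfolding eigenvalue_def eigenvector_def using A by (intro exI[of _ v]) (auto simp: v_def)
  with A show ?thesis
    by (rule algebraic_int_eigenvalue_of_int_mat)
qed

lemma power_degree_in_int_span_lower_powers:
  fixes x :: "'a :: field_char_0"
  assumes "poly (map_poly of_int p) x = 0" "lead_coeff p = 1"
  shows "x ^ degree p \<in> int_span ((\<lambda>i. x ^ i) ` {..<degree p})"
proof -
  let ?d = "degree p"
  have "0 = (\<Sum>j\<le>?d. of_int (coeff p j) * x ^ j)"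
    using assms(1) by (simp add: poly_altdef degree_map_poly)
  also have "\<dots> = (\<Sum>j<?d. of_int (coeff p j) * x ^ j) + x ^ ?d"
    using assms(2) by (simp add: lessThan_Suc_atMost[symmetric])
  finally have "x ^ ?d = (\<Sum>j<?d. of_int (- coeff p j) * x ^ j)"
    by (simp add: eq_neg_iff_add_eq_0 add.commute sum_negf)
  also have "\<dots> \<in> int_span ((\<lambda>i. x ^ i) ` {..<?d})"
    by (intro int_span_sum int_span_of_int_mult int_span_superset) auto
  finally show ?thesis .
qed

lemma algebraic_int_int_span_stableE:
  fixes x :: "'a :: field_char_0"
  assumes "algebraic_int x"
  obtains V where "finite V" "1 \<in> V" "\<And>v. v \<in> V \<Longrightarrow> x * v \<in> int_span V"
proof -
  from assms obtain p where p: "poly (map_poly of_int p) x = 0" "lead_coeff p = 1"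
    unfolding algebraic_int_altdef_ipoly by blast
  define d where "d = degree p"
  define V where "V = (\<lambda>i. x ^ i) ` {..<d}"
  have "d \<noteq> 0"
  proof
    assume "d = 0"
    then have "p = 1"
      using p(2) unfolding d_def by (metis degree_0_id one_pCons)
    with p(1) show False
      by simp
  qed
  then have "finite V" "1 \<in> V"
    unfolding V_def by (auto intro!: image_eqI[of _ _ 0])
  have "x * x ^ i \<in> int_span V" if "i < d" for i
  proof (cases "Suc i < d")
    case True
    then show ?thesis
      using \<open>finite V\<close> by (intro int_span_superset) (auto simp: V_def intro!: image_eqI[of _ _ "Suc i"])
  next
    case False
    with that have "Suc i = d"
      by simp
    then show ?thesis
      using power_degree_in_int_span_lower_powers[OF p] unfolding V_def d_def by (metis power_Suc)
  qed
  with \<open>finite V\<close> \<open>1 \<in> V\<close> show ?thesis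
    using that unfolding V_def by blast
qed

lemma algebraic_int_common_int_span_stableE:
  fixes x y :: "'a :: field_char_0"
  assumes "algebraic_int x" "algebraic_int y"
  obtains W where "finite W" "1 \<in> W"
    "\<And>w. w \<in> W \<Longrightarrow> x * w \<in> int_span W" "\<And>w. w \<in> W \<Longrightarrow> y * w \<in> int_span W"
proof -
  obtain V where V: "finite V" "1 \<in> V" "\<And>v. v \<in> V \<Longrightarrow> x * v \<in> int_span V"
    using algebraic_int_int_span_stableE[OF assms(1)] by blast
  obtain U where U: "finite U" "1 \<in> U" "\<And>u. u \<in> U \<Longrightarrow> y * u \<in> int_span U"
    using algebraic_int_int_span_stableE[OF assms(2)] by blast
  define W where "W = {v * u |v u. v \<in> V \<and> u \<in> U}"
  have "finite W"
    unfolding W_def using V(1) U(1) by (simp add: finite_image_set2)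
  moreover have "1 \<in> W"
    unfolding W_def using V(2) U(2) by force
  moreover have "x * w \<in> int_span W" "y * w \<in> int_span W" if "w \<in> W" for w
  proof -
    from that obtain v u where vu: "v \<in> V" "u \<in> U" "w = v * u"
      unfolding W_def by blast
    have "(x * v) * u \<in> int_span W" "v * (y * u) \<in> int_span W"
      unfolding W_def using vu
      by (intro int_span_mult V(1) U(1) V(3) U(3) int_span_superset; simp)+
    then show "x * w \<in> int_span W" "y * w \<in> int_span W"
      using vu by (simp_all add: ac_simps)
  qed
  ultimately show ?thesis
    using that by blast
qed

lemma algebraic_int_plus:
  fixes x y :: "'a :: field_char_0"
  assumes "algebraic_int x" "algebraic_int y"
  shows "algebraic_int (x + y)"
proof -
  obtain W where W: "finite W" "1 \<in> W"
    "\<And>w. w \<in> W \<Longrightarrow> x * w \<in> int_span W" "\<And>w. w \<in> W \<Longrightarrow> y * w \<in> int_span W"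
    using algebraic_int_common_int_span_stableE[OF assms] by blast
  show ?thesis
    by (rule algebraic_int_if_int_span_stable[OF W(1,2)]) (auto simp: distrib_right intro: int_span_add W(3,4))
qed

lemma algebraic_int_times:
  fixes x y :: "'a :: field_char_0"
  assumes "algebraic_int x" "algebraic_int y"
  shows "algebraic_int (x * y)"
proof -
  obtain W where W: "finite W" "1 \<in> W"
    "\<And>w. w \<in> W \<Longrightarrow> x * w \<in> int_span W" "\<And>w. w \<in> W \<Longrightarrow> y * w \<in> int_span W"
    using algebraic_int_common_int_span_stableE[OF assms] by blast
  show ?thesis
    by (rule algebraic_int_if_int_span_stable[OF W(1,2)])
      (auto simp: mult.assoc intro: int_span_mult_stable[OF W(1,3)] W(4))
qed

lemma algebraic_int_diff:
  fixes x y :: "'a :: field_char_0"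
  shows "algebraic_int x \<Longrightarrow> algebraic_int y \<Longrightarrow> algebraic_int (x - y)"
  using algebraic_int_plus[of x "- y"] by simp

lemma algebraic_int_power:
  fixes x :: "'a :: field_char_0"
  shows "algebraic_int x \<Longrightarrow> algebraic_int (x ^ n)"
  by (induction n) (auto intro: algebraic_int_times)

lemma algebraic_int_sum:
  fixes f :: "'b \<Rightarrow> 'a :: field_char_0"
  shows "(\<And>i. i \<in> I \<Longrightarrow> algebraic_int (f i)) \<Longrightarrow> algebraic_int (\<Sum>i\<in>I. f i)"
  by (induction I rule: infinite_finite_induct) (auto intro: algebraic_int_plus)

section \<open>Divisibility among algebraic integers\<close>

definition alg_int_dvd :: "'a :: field_char_0 \<Rightarrow> 'a \<Rightarrow> bool" where
  "alg_int_dvd a b \<longleftrightarrow> (\<exists>c. algebraic_int c \<and> b = a * c)"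

lemma alg_int_dvd_triv_left: "algebraic_int c \<Longrightarrow> alg_int_dvd a (a * c)"
  unfolding alg_int_dvd_def by blast

lemma alg_int_dvd_trans: "alg_int_dvd a b \<Longrightarrow> alg_int_dvd b c \<Longrightarrow> alg_int_dvd a c"
  unfolding alg_int_dvd_def by (metis algebraic_int_times mult.assoc)

lemma alg_int_dvd_mult: "alg_int_dvd a b \<Longrightarrow> alg_int_dvd c d \<Longrightarrow> alg_int_dvd (a * c) (b * d)"
  unfolding alg_int_dvd_def by (metis algebraic_int_times mult.assoc mult.left_commute)

lemma alg_int_dvd_power: "alg_int_dvd a b \<Longrightarrow> alg_int_dvd (a ^ n) (b ^ n)"
  unfolding alg_int_dvd_def by (metis algebraic_int_power power_mult_distrib)

lemma alg_int_dvd_sum: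
  "(\<And>i. i \<in> I \<Longrightarrow> alg_int_dvd a (f i)) \<Longrightarrow> alg_int_dvd a (\<Sum>i\<in>I. f i)"
proof (induction I rule: infinite_finite_induct)
  case (insert i I)
  then show ?case
    unfolding alg_int_dvd_def by (metis algebraic_int_plus distrib_left insert_iff sum.insert)
qed (auto simp: alg_int_dvd_def)

lemma alg_int_dvd_cancel_left: "c \<noteq> 0 \<Longrightarrow> alg_int_dvd (c * a) (c * b) \<Longrightarrow> alg_int_dvd a b"
  unfolding alg_int_dvd_def by (auto simp: mult.assoc)

lemma alg_int_dvd_iff_algebraic_int_divide: "a \<noteq> 0 \<Longrightarrow> alg_int_dvd a b \<longleftrightarrow> algebraic_int (b / a)"
  unfolding alg_int_dvd_def by auto

lemma alg_int_dvd_one_minus_power: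
  "algebraic_int w \<Longrightarrow> alg_int_dvd (1 - w) (1 - w ^ n)"
  unfolding one_diff_power_eq by (intro alg_int_dvd_triv_left algebraic_int_sum algebraic_int_power)

lemma two_power_not_alg_int_dvd_odd:
  assumes "odd n" "r > 0"
  shows "\<not> alg_int_dvd (2 ^ r) (of_nat n :: 'a :: field_char_0)"
proof
  assume "alg_int_dvd (2 ^ r) (of_nat n :: 'a)"
  then have "algebraic_int (of_nat n / 2 ^ r :: 'a)"
    by (simp add: alg_int_dvd_iff_algebraic_int_divide)
  then have "(of_nat n / 2 ^ r :: 'a) \<in> \<int>"
    by (intro rational_algebraic_int_is_int) simp_all
  then obtain k where "(of_nat n / 2 ^ r :: 'a) = of_int k"
    by (auto elim: Ints_cases)
  then have "(of_int (k * 2 ^ r) :: 'a) = of_int (int n)"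
    by (simp add: field_simps)
  then have "int n = k * 2 ^ r"
    by (simp only: of_int_eq_iff)
  with \<open>r > 0\<close> have "even (int n)"
    by simp
  with \<open>odd n\<close> show False
    by simp
qed

section \<open>Roots of unity\<close>

lemma algebraic_int_root_of_unity:
  fixes w :: "'a :: field_char_0"
  assumes "w ^ n = 1" "n > 0"
  shows "algebraic_int w"
proof (rule algebraic_int_root[where p = "monom 1 n"])
  show "poly (monom 1 n) w = 1"
    using assms by (simp add: poly_monom)
qed (use assms in \<open>auto simp: degree_monom_eq coeff_monom\<close>)

lemma one_minus_root_of_unity_dvd_order:
  fixes w :: "'a :: field_char_0"
  assumes "w ^ n = 1" "n > 0" "w \<noteq> 1"
  shows "alg_int_dvd (1 - w) (of_nat n)"
proof -
  have "(1 - w) * (\<Sum>j<n. w ^ j) = 0"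
    using assms(1) by (simp flip: one_diff_power_eq)
  with assms(3) have "(\<Sum>j<n. w ^ j) = 0"
    by simp
  then have "of_nat n = (\<Sum>j<n. 1 - w ^ j)"
    by (simp add: sum_subtractf)
  also have "alg_int_dvd (1 - w) \<dots>"
    using algebraic_int_root_of_unity[OF assms(1,2)]
    by (intro alg_int_dvd_sum alg_int_dvd_one_minus_power)
  finally show ?thesis .
qed

lemma two_power_root_of_unity_neg_oneE:
  fixes w :: "'a :: field"
  assumes "w ^ 2 ^ s = 1" "w \<noteq> 1"
  obtains k where "w ^ 2 ^ k = -1"
  using assms
proof (induction s)
  case (Suc s)
  have "(w ^ 2 ^ s) ^ 2 = 1"
    using Suc.prems(2) by (simp add: power_mult[symmetric] mult.commute)
  then consider "w ^ 2 ^ s = 1" | "w ^ 2 ^ s = -1"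
    by (auto simp: power2_eq_1_iff)
  then show ?case
    using Suc by cases blast+
qed simp

lemma one_minus_root_of_neg_one_power_dvd_two:
  fixes w :: "'a :: field_char_0"
  shows "w ^ 2 ^ k = -1 \<Longrightarrow> alg_int_dvd ((1 - w) ^ 2 ^ k) 2"
proof (induction k arbitrary: w)
  case 0
  then show ?case
    by (simp add: alg_int_dvd_def)
next
  case (Suc k)
  have "w ^ 2 ^ Suc (Suc k) = (w ^ 2 ^ Suc k) ^ 2"
    by (simp flip: power_mult)
  with Suc.prems have "w ^ 2 ^ Suc (Suc k) = 1"
    by simp
  then have "algebraic_int w"
    by (rule algebraic_int_root_of_unity) simp
  have "w ^ (1 + 2 ^ Suc k) = - w"
    using Suc.prems by (simp add: power_add)
  then have "alg_int_dvd (1 - w) (1 + w)"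
    using alg_int_dvd_one_minus_power[OF \<open>algebraic_int w\<close>, of "1 + 2 ^ Suc k"] by simp
  then have "alg_int_dvd ((1 - w) * (1 - w)) ((1 - w) * (1 + w))"
    by (intro alg_int_dvd_mult) (simp_all add: alg_int_dvd_def exI[of _ 1])
  then have "alg_int_dvd (((1 - w) ^ 2) ^ 2 ^ k) ((1 - w ^ 2) ^ 2 ^ k)"
    by (intro alg_int_dvd_power) (simp add: power2_eq_square algebra_simps)
  moreover have "alg_int_dvd ((1 - w ^ 2) ^ 2 ^ k) 2"
    using Suc.IH[of "w ^ 2"] Suc.prems by (simp add: power_mult[symmetric] mult.commute)
  ultimately show ?case
    by (auto simp: power_mult[symmetric] mult.commute intro: alg_int_dvd_trans)
qed

text \<open>The 2-adic valuation of 1 - w is at most e/M \<le> 1/2, with equality only if w^2 = -1.\<close>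

lemma one_minus_root_of_unity_power_dvdE:
  fixes w :: "'a :: field_char_0"
  assumes "w ^ L = 1" "L > 0" "w \<noteq> 1" "w \<noteq> -1"
  obtains M e n where "M > 0" "2 * e \<le> M" "2 * e = M \<Longrightarrow> w ^ 2 = -1" "odd n"
    "alg_int_dvd ((1 - w) ^ M) (2 ^ e * of_nat n)"
proof -
  obtain n where "L = 2 ^ multiplicity 2 L * n" "odd n"
    by (rule multiplicity_decompose'[of L "2 :: nat"]) (use assms(2) in auto)
  then obtain s where L: "L = 2 ^ s * n" "odd n"
    by blast
  show ?thesis
  proof (cases "w ^ 2 ^ s = 1")
    case True
    then obtain k where k: "w ^ 2 ^ k = -1"
      using assms(3) by (rule two_power_root_of_unity_neg_oneE)
    with assms(4) have "k > 0"
      by (cases k) auto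
    then have "2 ^ 1 \<le> (2 :: nat) ^ k"
      by (intro power_increasing) simp_all
    moreover have "w ^ 2 = -1" if "2 = (2 :: nat) ^ k"
      using that k by (metis power_one_right power_inject_exp one_less_numeral_iff semiring_norm(76))
    ultimately show ?thesis
      using that[of "2 ^ k" 1 1] one_minus_root_of_neg_one_power_dvd_two[OF k] by simp
  next
    case False
    have "algebraic_int w"
      using assms(1,2) by (rule algebraic_int_root_of_unity)
    have "alg_int_dvd (1 - w ^ 2 ^ s) (of_nat n)"
      using False assms(1,2) L by (intro one_minus_root_of_unity_dvd_order) (simp_all add: power_mult)
    then have "alg_int_dvd (1 - w) (of_nat n)"
      by (rule alg_int_dvd_trans[OF alg_int_dvd_one_minus_power[OF \<open>algebraic_int w\<close>]])
    then show ?thesis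
      using that[of 1 0 n] L(2) by simp
  qed
qed

lemma cross_sum_less_product:
  fixes M\<^sub>1 M\<^sub>2 e\<^sub>1 e\<^sub>2 :: nat
  assumes "M\<^sub>1 > 0" "M\<^sub>2 > 0" "2 * e\<^sub>1 \<le> M\<^sub>1" "2 * e\<^sub>2 \<le> M\<^sub>2" "2 * e\<^sub>1 < M\<^sub>1 \<or> 2 * e\<^sub>2 < M\<^sub>2"
  shows "e\<^sub>1 * M\<^sub>2 + e\<^sub>2 * M\<^sub>1 < M\<^sub>1 * M\<^sub>2"
proof -
  have "2 * e\<^sub>1 * M\<^sub>2 \<le> M\<^sub>1 * M\<^sub>2" "2 * e\<^sub>2 * M\<^sub>1 \<le> M\<^sub>2 * M\<^sub>1"
    using assms(3,4) by simp_all
  moreover have "2 * e\<^sub>1 * M\<^sub>2 < M\<^sub>1 * M\<^sub>2 \<or> 2 * e\<^sub>2 * M\<^sub>1 < M\<^sub>2 * M\<^sub>1"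
    using assms(1,2,5) by auto
  moreover have "2 * (e\<^sub>1 * M\<^sub>2 + e\<^sub>2 * M\<^sub>1) = 2 * e\<^sub>1 * M\<^sub>2 + 2 * e\<^sub>2 * M\<^sub>1"
    "2 * (M\<^sub>1 * M\<^sub>2) = M\<^sub>1 * M\<^sub>2 + M\<^sub>2 * M\<^sub>1"
    by simp_all
  ultimately show ?thesis
    by linarith
qed

lemma not_algebraic_int_half_prod_one_minus_roots_of_unity:
  fixes w\<^sub>1 w\<^sub>2 :: "'a :: field_char_0"
  assumes "w\<^sub>1 ^ L\<^sub>1 = 1" "L\<^sub>1 > 0" "w\<^sub>1 \<noteq> 1" "w\<^sub>1 \<noteq> -1"
    and "w\<^sub>2 ^ L\<^sub>2 = 1" "L\<^sub>2 > 0" "w\<^sub>2 \<noteq> 1" "w\<^sub>2 \<noteq> -1"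
    and "\<not> (w\<^sub>1 ^ 2 = -1 \<and> w\<^sub>2 ^ 2 = -1)"
  shows "\<not> algebraic_int ((1 - w\<^sub>1) * (1 - w\<^sub>2) / 2)"
proof
  assume "algebraic_int ((1 - w\<^sub>1) * (1 - w\<^sub>2) / 2)"
  obtain M\<^sub>1 e\<^sub>1 n\<^sub>1 where 1: "M\<^sub>1 > 0" "2 * e\<^sub>1 \<le> M\<^sub>1" "2 * e\<^sub>1 = M\<^sub>1 \<Longrightarrow> w\<^sub>1 ^ 2 = -1" "odd n\<^sub>1"
    "alg_int_dvd ((1 - w\<^sub>1) ^ M\<^sub>1) (2 ^ e\<^sub>1 * of_nat n\<^sub>1)"
    using one_minus_root_of_unity_power_dvdE[OF assms(1-4)] by blast
  obtain M\<^sub>2 e\<^sub>2 n\<^sub>2 where 2: "M\<^sub>2 > 0" "2 * e\<^sub>2 \<le> M\<^sub>2" "2 * e\<^sub>2 = M\<^sub>2 \<Longrightarrow> w\<^sub>2 ^ 2 = -1" "odd n\<^sub>2"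
    "alg_int_dvd ((1 - w\<^sub>2) ^ M\<^sub>2) (2 ^ e\<^sub>2 * of_nat n\<^sub>2)"
    using one_minus_root_of_unity_power_dvdE[OF assms(5-8)] by blast
  define P where "P = M\<^sub>1 * M\<^sub>2"
  define E where "E = e\<^sub>1 * M\<^sub>2 + e\<^sub>2 * M\<^sub>1"
  define N where "N = n\<^sub>1 ^ M\<^sub>2 * n\<^sub>2 ^ M\<^sub>1"
  have "2 * e\<^sub>1 < M\<^sub>1 \<or> 2 * e\<^sub>2 < M\<^sub>2"
    using 1(2,3) 2(2,3) assms(9) le_neq_implies_less by blast
  then have "E < P"
    unfolding E_def P_def by (rule cross_sum_less_product[OF 1(1) 2(1) 1(2) 2(2)])
  have "alg_int_dvd (((1 - w\<^sub>1) ^ M\<^sub>1) ^ M\<^sub>2 * ((1 - w\<^sub>2) ^ M\<^sub>2) ^ M\<^sub>1)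
      ((2 ^ e\<^sub>1 * of_nat n\<^sub>1) ^ M\<^sub>2 * (2 ^ e\<^sub>2 * of_nat n\<^sub>2) ^ M\<^sub>1)"
    using 1(5) 2(5) by (intro alg_int_dvd_mult alg_int_dvd_power)
  then have "alg_int_dvd (((1 - w\<^sub>1) * (1 - w\<^sub>2)) ^ P) (2 ^ E * of_nat N)"
    unfolding P_def E_def N_def
    by (simp add: power_mult_distrib power_add ac_simps flip: power_mult)
  moreover have "alg_int_dvd (2 ^ P) (((1 - w\<^sub>1) * (1 - w\<^sub>2)) ^ P)"
    using alg_int_dvd_triv_left[OF algebraic_int_power[OF \<open>algebraic_int _\<close>], of "2 ^ P" P]
    by (simp add: power_divide)
  ultimately have "alg_int_dvd (2 ^ E * 2 ^ (P - E)) (2 ^ E * of_nat N :: 'a)"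
    using \<open>E < P\<close> by (simp add: alg_int_dvd_trans flip: power_add)
  then have "alg_int_dvd (2 ^ (P - E)) (of_nat N :: 'a)"
    by (rule alg_int_dvd_cancel_left[rotated]) simp
  moreover have "odd N"
    unfolding N_def using 1(4) 2(4) by simp
  ultimately show False
    using two_power_not_alg_int_dvd_odd \<open>E < P\<close> by (metis zero_less_diff)
qed

lemma eq_pm_inverse_if_squares_neg_one:
  fixes x y :: "'a :: field"
  assumes "x \<noteq> 0" "(y / x) ^ 2 = -1" "(x * y) ^ 2 = -1"
  shows "x = inverse x \<or> x = - inverse x"
proof -
  have "y ^ 2 = - (x ^ 2)" "x ^ 2 * y ^ 2 = -1"
    using assms by (auto simp: power_divide power_mult_distrib field_simps)
  then have "(x ^ 2) ^ 2 = 1"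
    by (simp add: power2_eq_square)
  then have "x ^ 2 = 1 \<or> x ^ 2 = -1"
    by (simp only: power2_eq_1_iff)
  with assms(1) show ?thesis
    by (auto simp: field_simps power2_eq_square)
qed

lemma rat_lin_indep4_sign_distinct:
  assumes "rat_lin_indep4 a b c d" "s \<in> {1, -1}"
  shows "a \<noteq> s * b" "a \<noteq> s * c" "b \<noteq> s * c"
proof -
  obtain r where r: "s = of_rat r" "r \<noteq> 0"
    using assms(2) by (metis insert_iff empty_iff of_rat_1 of_rat_minus neg_equal_0_iff_equal one_neq_zero)
  have no_relation: "q\<^sub>1 = 0 \<and> q\<^sub>2 = 0"
    if "of_rat q\<^sub>1 * a + of_rat q\<^sub>2 * b + of_rat q\<^sub>3 * c + of_rat q\<^sub>4 * d = 0" for q\<^sub>1 q\<^sub>2 q\<^sub>3 q\<^sub>4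
    using assms(1) that unfolding rat_lin_indep4_def by blast
  show "a \<noteq> s * b"
    using no_relation[of 1 "- r" 0 0] by (auto simp: r of_rat_minus)
  show "a \<noteq> s * c"
    using no_relation[of 1 0 "- r" 0] by (auto simp: r of_rat_minus)
  show "b \<noteq> s * c"
    using no_relation[of 0 1 "- r" 0] r(2) by (auto simp: r of_rat_minus)
qed

lemma not_algebraic_int_half_sum_roots_of_unity_inverses:
  fixes x y :: complex
  assumes "x ^ n = 1" "y ^ n = 1" "n > 0"
    and indep: "rat_lin_indep4 x (inverse x) y (inverse y)"
  shows "\<not> algebraic_int ((x + inverse x + y + inverse y) / 2)"
proof
  assume "algebraic_int ((x + inverse x + y + inverse y) / 2)"
  have "x \<noteq> 0" "y \<noteq> 0"
    using assms(1-3) by (auto simp: zero_power)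
  define w\<^sub>1 where "w\<^sub>1 = - (y / x)"
  define w\<^sub>2 where "w\<^sub>2 = - (x * y)"
  have "(1 - w\<^sub>1) * (1 - w\<^sub>2) / 2 = y * ((x + inverse x + y + inverse y) / 2)"
    using \<open>x \<noteq> 0\<close> \<open>y \<noteq> 0\<close> by (simp add: w\<^sub>1_def w\<^sub>2_def field_simps)
  then have "algebraic_int ((1 - w\<^sub>1) * (1 - w\<^sub>2) / 2)"
    using algebraic_int_times[OF algebraic_int_root_of_unity[OF assms(2,3)] \<open>algebraic_int _\<close>] by simp
  moreover have "w\<^sub>1 ^ (2 * n) = 1" "w\<^sub>2 ^ (2 * n) = 1"
  proof -
    have "w\<^sub>1 ^ (2 * n) = (y / x) ^ (2 * n)" "w\<^sub>2 ^ (2 * n) = (x * y) ^ (2 * n)"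
      unfolding w\<^sub>1_def w\<^sub>2_def by simp_all
    with assms(1,2) show "w\<^sub>1 ^ (2 * n) = 1" "w\<^sub>2 ^ (2 * n) = 1"
      by (simp_all add: power_even_eq power_divide power_mult_distrib)
  qed
  moreover have "w\<^sub>1 \<noteq> 1" "w\<^sub>1 \<noteq> -1" "w\<^sub>2 \<noteq> 1" "w\<^sub>2 \<noteq> -1"
    using rat_lin_indep4_sign_distinct(2,3)[OF indep, of 1] rat_lin_indep4_sign_distinct(2,3)[OF indep, of "-1"]
      \<open>x \<noteq> 0\<close> by (auto simp: w\<^sub>1_def w\<^sub>2_def field_simps)
  moreover have "\<not> (w\<^sub>1 ^ 2 = -1 \<and> w\<^sub>2 ^ 2 = -1)"
    using eq_pm_inverse_if_squares_neg_one[OF \<open>x \<noteq> 0\<close>, of y]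
      rat_lin_indep4_sign_distinct(1)[OF indep, of 1] rat_lin_indep4_sign_distinct(1)[OF indep, of "-1"]
    by (auto simp: w\<^sub>1_def w\<^sub>2_def)
  ultimately show False
    using not_algebraic_int_half_prod_one_minus_roots_of_unity[of w\<^sub>1 "2 * n" w\<^sub>2 "2 * n"] assms(3) by auto
qed

lemma algebraic_int_half_sum_sign_change:
  fixes a b c d s\<^sub>1 s\<^sub>2 s\<^sub>3 s\<^sub>4 :: "'a :: field_char_0"
  assumes "algebraic_int a" "algebraic_int b" "algebraic_int c" "algebraic_int d"
    and "s\<^sub>1 \<in> {1, -1}" "s\<^sub>2 \<in> {1, -1}" "s\<^sub>3 \<in> {1, -1}" "s\<^sub>4 \<in> {1, -1}"
    and "algebraic_int ((s\<^sub>1 * a + s\<^sub>2 * b + s\<^sub>3 * c + s\<^sub>4 * d) / 2)"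
  shows "algebraic_int ((a + b + c + d) / 2)"
proof -
  have eq: "(a + b + c + d) / 2 = (s\<^sub>1 * a + s\<^sub>2 * b + s\<^sub>3 * c + s\<^sub>4 * d) / 2
      - ((s\<^sub>1 - 1) / 2 * a + (s\<^sub>2 - 1) / 2 * b + (s\<^sub>3 - 1) / 2 * c + (s\<^sub>4 - 1) / 2 * d)"
    by (simp add: field_simps)
  have half: "algebraic_int ((s - 1) / 2)" if "s \<in> {1, -1}" for s :: 'a
    using that by auto
  show ?thesis
    unfolding eq using half[OF assms(5)] half[OF assms(6)] half[OF assms(7)] half[OF assms(8)]
    by (intro algebraic_int_diff algebraic_int_plus algebraic_int_times assms(1-4,9))
qed

theorem lemma9p16:
  fixes m p q :: nat and s1 s2 s3 s4 :: complex
  assumes "m \<ge> 2" and "m mod 4 \<noteq> 2" and "p > 0" and "q > 0"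
    and "rat_lin_indep4 (zeta m ^ p) (inverse (zeta m ^ p)) (zeta m ^ q) (inverse (zeta m ^ q))"
    and "s1 \<in> {1, -1}" and "s2 \<in> {1, -1}" and "s3 \<in> {1, -1}" and "s4 \<in> {1, -1}"
  shows "\<not> algebraic_int
           ((s1 * zeta m ^ p + s2 * inverse (zeta m ^ p) + s3 * zeta m ^ q + s4 * inverse (zeta m ^ q)) / 2)"
proof
  define x where "x = zeta m ^ p"
  define y where "y = zeta m ^ q"
  assume "algebraic_int
           ((s1 * zeta m ^ p + s2 * inverse (zeta m ^ p) + s3 * zeta m ^ q + s4 * inverse (zeta m ^ q)) / 2)"
  then have signed: "algebraic_int ((s1 * x + s2 * inverse x + s3 * y + s4 * inverse y) / 2)"
    by (simp add: x_def y_def)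
  have "m > 0"
    using assms(1) by simp
  have "zeta m ^ m = 1"
    using \<open>m > 0\<close> by (simp add: zeta_def DeMoivre)
  then have "x ^ m = 1" "y ^ m = 1"
    unfolding x_def y_def by (metis power_mult mult.commute power_one)+
  then have roots: "x ^ m = 1" "y ^ m = 1" "inverse x ^ m = 1" "inverse y ^ m = 1"
    by (simp_all add: power_inverse)
  then have "algebraic_int x" "algebraic_int (inverse x)" "algebraic_int y" "algebraic_int (inverse y)"
    using algebraic_int_root_of_unity[OF _ \<open>m > 0\<close>] by blast+
  then have "algebraic_int ((x + inverse x + y + inverse y) / 2)"
    by (rule algebraic_int_half_sum_sign_change[OF _ _ _ _ assms(6-9) signed])
  moreover have "rat_lin_indep4 x (inverse x) y (inverse y)"
    using assms(5) by (simp add: x_def y_def)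
  ultimately show False
    using not_algebraic_int_half_sum_roots_of_unity_inverses roots(1,2) \<open>m > 0\<close> by blast
qed

end
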